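(* Let $f(\mathbf{x})=\mathbf{x}^{T}A\mathbf{x}+b^{T}\mathbf{x}+1$ with $A\in\mathbb{R}^{n\times n}$ symmetric and $b\in\mathbb{R}^n$. Then there exist real diagonal $2\times 2$ matrices $A_1,\dots,A_n$ with $f(\mathbf{x})=\det(I_2+x_1A_1+\dots+x_nA_n)$ if and only if $A-\frac14 bb^{T}$ is negative semidefinite and has rank at most $1$. *)

theory Defs
  imports "HOL-Analysis.Analysis"
begin

definition diagonal_mat :: "real^'m^'m \<Rightarrow> bool" where
  "diagonal_mat M \<longleftrightarrow> (\<forall>i j. i \<noteq> j \<longrightarrow> M $ i $ j = 0)"

definition neg_semidef :: "real^'n^'n \<Rightarrow> bool" where
  "neg_semidef M \<longleftrightarrow> (\<forall>v. v \<bullet> (M *v v) \<le> 0)"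

definition outer :: "real^'n \<Rightarrow> real^'n \<Rightarrow> real^'n^'n" where
  "outer u v = (\<chi> i j. u $ i * v $ j)"

end

theory Submission
  imports Defs
begin

text \<open>
  For diagonal \<open>A\<^sub>i\<close> the determinant is the product of the two affine forms \<open>1 + a \<bullet> x\<close> and
  \<open>1 + c \<bullet> x\<close> read off the diagonal entries. Comparing \<open>f x\<close> with \<open>f (-x)\<close> such a factorisation
  exists iff \<open>b = a + c\<close> and \<open>x\<^sup>T A x = (a \<bullet> x)(c \<bullet> x)\<close>; completing the square, the latter says
  \<open>A - bb\<^sup>T/4 = -dd\<^sup>T\<close> with \<open>d = (a - c)/2\<close>. Finally, a symmetric matrix has the form \<open>-dd\<^sup>T\<close>
  exactly when it is negative semidefinite of rank at most one.
\<close>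

lemma outer_mult_vec: "outer u w *v v = (w \<bullet> v) *\<^sub>R u"
  by (simp add: vec_eq_iff outer_def matrix_vector_mult_def inner_vec_def sum_distrib_left mult_ac)

lemma matrix_vector_mult_uminus: "(A::real^'n^'m) *v (- x) = - (A *v x)"
  by (simp add: vec_eq_iff matrix_vector_mult_def sum_negf)

lemma uminus_matrix_vector_mult: "(- A::real^'n^'m) *v x = - (A *v x)"
  by (simp add: vec_eq_iff matrix_vector_mult_def sum_negf)

lemma quadratic_form_outer: "v \<bullet> (outer d d *v v) = (d \<bullet> v)\<^sup>2"
  by (simp add: outer_mult_vec power2_eq_square inner_commute)

lemma quadratic_form_diff_scaleR_outer:
  "v \<bullet> ((A - k *\<^sub>R outer b b) *v v) = v \<bullet> (A *v v) - k * (b \<bullet> v)\<^sup>2"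
  by (simp add: matrix_vector_mult_diff_rdistrib scaleR_matrix_vector_assoc[symmetric]
      inner_diff_right quadratic_form_outer[symmetric])

lemma symmetric_inner_commute:
  "transpose (M::real^'n^'n) = M \<Longrightarrow> w \<bullet> (M *v v) = v \<bullet> (M *v w)"
  by (metis dot_lmul_matrix inner_commute transpose_matrix_vector)

lemma symmetric_quadratic_form_eq:
  fixes M N :: "real^'n^'n"
  assumes "transpose M = M" "transpose N = N" "\<And>v. v \<bullet> (M *v v) = v \<bullet> (N *v v)"
  shows "M = N"
proof -
  let ?D = "M - N"
  have "transpose ?D = transpose M - transpose N" by (simp add: vec_eq_iff transpose_def)
  hence sym: "transpose ?D = ?D" using assms by simp
  have quad: "v \<bullet> (?D *v v) = 0" for v
    using assms by (simp add: matrix_vector_mult_diff_rdistrib inner_diff_right)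
  have "u \<bullet> (?D *v v) = 0" for u v
  proof -
    \<comment> \<open>polarisation\<close>
    have "(u + v) \<bullet> (?D *v (u + v)) = 0" by (rule quad)
    hence "u \<bullet> (?D *v v) + v \<bullet> (?D *v u) = 0"
      using quad[of u] quad[of v]
      by (simp add: matrix_vector_right_distrib inner_add_left inner_add_right)
    with symmetric_inner_commute[OF sym, of u v] show ?thesis by simp
  qed
  hence "?D *v v = 0" for v using inner_eq_zero_iff by blast
  hence "?D = 0" by (intro matrix_eq[THEN iffD2]) simp
  thus ?thesis by simp
qed

lemma rank_scaleR_outer_self_le_1: "rank (k *\<^sub>R outer (d::real^'n) d) \<le> 1"
proof -
  have "range (\<lambda>x. (k *\<^sub>R outer d d) *v x) \<subseteq> span {d}"
    by (auto simp: scaleR_matrix_vector_assoc[symmetric] outer_mult_vec span_singleton)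
  hence "dim (range (\<lambda>x. (k *\<^sub>R outer d d) *v x)) \<le> dim (span {d})" by (rule dim_subset)
  also have "\<dots> \<le> 1" by simp
  finally show ?thesis by (simp add: rank_dim_range)
qed

lemma rank_le_1_imp_range_span:
  fixes M :: "real^'n^'m"
  assumes "rank M \<le> 1"
  obtains u where "\<And>v. M *v v \<in> span {u}"
proof (cases "\<forall>v. M *v v = 0")
  case True
  then show ?thesis by (intro that[of 0]) simp
next
  case False
  then obtain v0 where nz: "M *v v0 \<noteq> 0" by blast
  have "M *v v \<in> span {M *v v0}" for v
  proof (rule ccontr)
    assume nin: "M *v v \<notin> span {M *v v0}"
    have ind: "independent {M *v v, M *v v0}"
      using nin nz by (intro independent_insertI) (auto simp: independent_empty)
    have "card {M *v v, M *v v0} \<le> dim (range (\<lambda>x. M *v x))"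
      by (rule independent_card_le_dim[OF _ ind]) auto
    moreover have "M *v v \<noteq> M *v v0" using nin span_base[of "M *v v0" "{M *v v0}"] by auto
    ultimately show False using assms by (simp add: rank_dim_range)
  qed
  then show ?thesis by (rule that)
qed

lemma neg_semidef_rank_le_1_iff:
  fixes M :: "real^'n^'n"
  assumes sym: "transpose M = M"
  shows "neg_semidef M \<and> rank M \<le> 1 \<longleftrightarrow> (\<exists>d. M = - outer d d)"
proof
  assume "neg_semidef M \<and> rank M \<le> 1"
  hence nsd: "neg_semidef M" and rk: "rank M \<le> 1" by auto
  obtain u where "\<And>v. M *v v \<in> span {u}" using rank_le_1_imp_range_span[OF rk] by blast
  hence "\<forall>v. \<exists>k. M *v v = k *\<^sub>R u" by (auto simp: span_singleton)
  then obtain \<phi> where \<phi>: "\<And>v. M *v v = \<phi> v *\<^sub>R u" by metis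
  show "\<exists>d. M = - outer d d"
  proof (cases "u = 0")
    case True
    with \<phi> have "M *v v = (- outer 0 0) *v v" for v
      by (simp add: uminus_matrix_vector_mult outer_mult_vec)
    then show ?thesis by (metis matrix_eq)
  next
    case False
    hence uu: "u \<bullet> u > 0" by simp
    define c where "c = \<phi> u / (u \<bullet> u)"
    \<comment> \<open>symmetry forces \<open>\<phi>\<close> to be a multiple of \<open>u \<bullet> _\<close>\<close>
    have Mv: "M *v v = (c * (u \<bullet> v)) *\<^sub>R u" for v
    proof -
      have "\<phi> v * (u \<bullet> u) = \<phi> u * (v \<bullet> u)"
        using symmetric_inner_commute[OF sym, of u v] \<phi>[of u] \<phi>[of v] by simp
      hence "\<phi> v = c * (u \<bullet> v)" using uu by (simp add: c_def field_simps inner_commute)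
      thus ?thesis using \<phi> by simp
    qed
    have "u \<bullet> (M *v u) \<le> 0" using nsd by (simp add: neg_semidef_def)
    hence "c * (u \<bullet> u) * (u \<bullet> u) \<le> 0" by (simp add: Mv mult_ac)
    hence c0: "c \<le> 0" using uu by (simp add: mult_le_0_iff)
    define d where "d = sqrt (-c) *\<^sub>R u"
    have "M *v v = (- outer d d) *v v" for v
    proof -
      have "(d \<bullet> v) *\<^sub>R d = (sqrt (-c) * sqrt (-c) * (u \<bullet> v)) *\<^sub>R u"
        by (simp add: d_def algebra_simps)
      also have "\<dots> = - (M *v v)" using c0 by (simp add: Mv)
      finally show ?thesis by (simp add: uminus_matrix_vector_mult outer_mult_vec)
    qed
    then show ?thesis by (metis matrix_eq)
  qed
next
  assume "\<exists>d. M = - outer d d"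
  then obtain d where M: "M = - outer d d" ..
  have "v \<bullet> (M *v v) = - (d \<bullet> v)\<^sup>2" for v
    by (simp add: M uminus_matrix_vector_mult quadratic_form_outer)
  moreover have "rank M \<le> 1"
    using rank_scaleR_outer_self_le_1[of "-1" d] by (simp add: M)
  ultimately show "neg_semidef M \<and> rank M \<le> 1" by (simp add: neg_semidef_def)
qed

lemma diagonal_pencil_iff_affine_factors:
  fixes g :: "real^'n \<Rightarrow> real"
  shows "(\<exists>As :: 'n \<Rightarrow> real^2^2. (\<forall>i. diagonal_mat (As i)) \<and>
            (\<forall>x. g x = det (mat 1 + (\<Sum>i\<in>UNIV. x $ i *\<^sub>R As i))))
         \<longleftrightarrow> (\<exists>a c. \<forall>x. g x = (1 + a \<bullet> x) * (1 + c \<bullet> x))"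
    (is "(\<exists>As. ?diag As \<and> ?rep As) \<longleftrightarrow> _")
proof -
  have det_pencil: "det (mat 1 + (\<Sum>i\<in>UNIV. x $ i *\<^sub>R As i))
      = (1 + (\<chi> i. As i $ 1 $ 1) \<bullet> x) * (1 + (\<chi> i. As i $ 2 $ 2) \<bullet> x)"
    if "?diag As" for As :: "'n \<Rightarrow> real^2^2" and x
    using that by (simp add: det_2 diagonal_mat_def sum_component mat_def inner_vec_def mult.commute)
  show ?thesis
  proof
    assume "\<exists>As. ?diag As \<and> ?rep As"
    then obtain As where "?diag As" "?rep As" by blast
    then show "\<exists>a c. \<forall>x. g x = (1 + a \<bullet> x) * (1 + c \<bullet> x)" by (auto simp: det_pencil)
  next
    assume "\<exists>a c. \<forall>x. g x = (1 + a \<bullet> x) * (1 + c \<bullet> x)"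
    then obtain a c where g: "\<And>x. g x = (1 + a \<bullet> x) * (1 + c \<bullet> x)" by blast
    define As :: "'n \<Rightarrow> real^2^2" where
      "As i = (\<chi> j k. if j = k then (if j = 1 then a $ i else c $ i) else 0)" for i
    have "?diag As" by (simp add: As_def diagonal_mat_def)
    moreover have "(\<chi> i. As i $ 1 $ 1) = a" "(\<chi> i. As i $ 2 $ 2) = c"
      by (simp_all add: As_def vec_eq_iff)
    ultimately have "?diag As \<and> ?rep As" by (simp add: det_pencil g)
    then show "\<exists>As. ?diag As \<and> ?rep As" by blast
  qed
qed

lemma affine_factors_iff_neg_outer:
  fixes A :: "real^'n^'n"
  assumes sym: "transpose A = A"
  shows "(\<exists>a c. \<forall>x. x \<bullet> (A *v x) + b \<bullet> x + 1 = (1 + a \<bullet> x) * (1 + c \<bullet> x))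
         \<longleftrightarrow> (\<exists>d. A - (1/4) *\<^sub>R outer b b = - outer d d)"
proof
  assume "\<exists>a c. \<forall>x. x \<bullet> (A *v x) + b \<bullet> x + 1 = (1 + a \<bullet> x) * (1 + c \<bullet> x)"
  then obtain a c where H: "\<And>x. x \<bullet> (A *v x) + b \<bullet> x + 1 = (1 + a \<bullet> x) * (1 + c \<bullet> x)"
    by blast
  \<comment> \<open>the even and odd parts of both sides in \<open>x\<close> agree\<close>
  have quad: "x \<bullet> (A *v x) = (a \<bullet> x) * (c \<bullet> x)" and lin: "(b - (a + c)) \<bullet> x = 0" for x
    using H[of x] H[of "-x"]
    by (simp_all add: matrix_vector_mult_uminus inner_diff_left inner_add_left algebra_simps)
  have b: "b = a + c" using lin[of "b - (a + c)"] by simp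
  define d where "d = (1/2) *\<^sub>R (a - c)"
  have "A - (1/4) *\<^sub>R outer b b = - outer d d"
  proof (rule symmetric_quadratic_form_eq)
    show "transpose (A - (1/4) *\<^sub>R outer b b) = A - (1/4) *\<^sub>R outer b b"
      "transpose (- outer d d) = - outer d d"
      using sym by (simp_all add: vec_eq_iff transpose_def outer_def mult.commute)
    show "v \<bullet> ((A - (1/4) *\<^sub>R outer b b) *v v) = v \<bullet> ((- outer d d) *v v)" for v
      unfolding quadratic_form_diff_scaleR_outer uminus_matrix_vector_mult inner_minus_right
        quadratic_form_outer
      by (simp add: quad b d_def inner_add_left inner_diff_left power2_eq_square algebra_simps)
  qed
  then show "\<exists>d. A - (1/4) *\<^sub>R outer b b = - outer d d" ..
next
  assume "\<exists>d. A - (1/4) *\<^sub>R outer b b = - outer d d"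
  then obtain d where M: "A - (1/4) *\<^sub>R outer b b = - outer d d" ..
  have "x \<bullet> (A *v x) = (1/4) * (b \<bullet> x)\<^sup>2 - (d \<bullet> x)\<^sup>2" for x
    using arg_cong[OF M, of "\<lambda>M. x \<bullet> (M *v x)"]
    by (simp add: quadratic_form_diff_scaleR_outer uminus_matrix_vector_mult quadratic_form_outer)
  then have "x \<bullet> (A *v x) + b \<bullet> x + 1
      = (1 + ((1/2) *\<^sub>R b + d) \<bullet> x) * (1 + ((1/2) *\<^sub>R b - d) \<bullet> x)" for x
    by (simp add: inner_add_left inner_diff_left power2_eq_square algebra_simps)
  then show "\<exists>a c. \<forall>x. x \<bullet> (A *v x) + b \<bullet> x + 1 = (1 + a \<bullet> x) * (1 + c \<bullet> x)" by blast
qed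

theorem mainTheorem3:
  fixes A :: "real^'n^'n" and b :: "real^'n"
  assumes "transpose A = A"
  shows "(\<exists>As :: 'n \<Rightarrow> real^2^2. (\<forall>i. diagonal_mat (As i)) \<and>
            (\<forall>x :: real^'n. x \<bullet> (A *v x) + b \<bullet> x + 1
               = det (mat 1 + (\<Sum>i\<in>UNIV. x $ i *\<^sub>R As i))))
         \<longleftrightarrow> (neg_semidef (A - (1/4) *\<^sub>R outer b b) \<and> rank (A - (1/4) *\<^sub>R outer b b) \<le> 1)"
proof -
  have "transpose (A - (1/4) *\<^sub>R outer b b) = A - (1/4) *\<^sub>R outer b b"
    using assms by (simp add: vec_eq_iff transpose_def outer_def mult.commute)
  then show ?thesis
    by (simp only: diagonal_pencil_iff_affine_factors affine_factors_iff_neg_outer[OF assms]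
        neg_semidef_rank_le_1_iff)
qed

end
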